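(* Let $G=(V=V_0\uplus V_1,v_{\mathsf{init}},E,\gamma)$ be a quantitative graph game and let $d=\frac{p}{q}>1$ be the discount factor, with $p,q$ positive integers. Then the minimal non-zero difference between the costs of simple lassos in $G$ is a rational number with denominator at most $(p^{|V|}-q^{|V|})^2\cdot p^{2|V|}$.
   Context: A quantitative graph game $G=(V=V_0\uplus V_1, v_{\mathsf{init}},E,\gamma)$ consists of a finite directed graph $(V,E)$ in which every state has at least one outgoing edge, a partition of $V$ into $V_0$ and $V_1$, an initial state $v_{\mathsf{init}}$, and an integer cost function $\gamma:E\to\mathbb{Z}$. A lasso is an infinite path of the form $v_0v_1\dots v_n(s_0s_1\dots s_m)^{\omega}$ in $(V,E)$ starting at $v_{\mathsf{init}}$; it is simple if all the states $v_0,\dots,v_n,s_0,\dots,s_m$ are distinct. The cost of a lasso (or any play) $u_0u_1\dots$ with discount factor $d$ is $\sum_{k\ge0}\gamma(u_k,u_{k+1})/d^{k}$. *)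

theory Defs
  imports Complex_Main
begin

text \<open>The integer cost function is a separate parameter
  gamma :: 'v \<Rightarrow> 'v \<Rightarrow> int (only its values on E matter).\<close>
definition quant_game :: "'v set \<Rightarrow> 'v set \<Rightarrow> 'v set \<Rightarrow> 'v \<Rightarrow> ('v \<times> 'v) set \<Rightarrow> bool" where
  "quant_game V V0 V1 vinit E \<longleftrightarrow>
     finite V \<and> V0 \<union> V1 = V \<and> V0 \<inter> V1 = {} \<and> vinit \<in> V \<and> E \<subseteq> V \<times> V \<and>
     (\<forall>v\<in>V. \<exists>w. (v, w) \<in> E)"

definition lasso_play :: "'v list \<Rightarrow> 'v list \<Rightarrow> nat \<Rightarrow> 'v" where
  "lasso_play pre cyc k =
     (if k < length pre then pre ! k else cyc ! ((k - length pre) mod length cyc))"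

text \<open>A lasso v0..vn (s0..sm)^omega in (V,E) starting at vinit (the prefix may be empty);
  it is simple if all listed states are distinct.\<close>
definition lasso :: "'v set \<Rightarrow> ('v \<times> 'v) set \<Rightarrow> 'v \<Rightarrow> 'v list \<Rightarrow> 'v list \<Rightarrow> bool" where
  "lasso V E vinit pre cyc \<longleftrightarrow>
     cyc \<noteq> [] \<and> set (pre @ cyc) \<subseteq> V \<and> hd (pre @ cyc) = vinit \<and>
     (\<forall>k. (lasso_play pre cyc k, lasso_play pre cyc (Suc k)) \<in> E)"

definition simple_lasso :: "'v set \<Rightarrow> ('v \<times> 'v) set \<Rightarrow> 'v \<Rightarrow> 'v list \<Rightarrow> 'v list \<Rightarrow> bool" where
  "simple_lasso V E vinit pre cyc \<longleftrightarrow> lasso V E vinit pre cyc \<and> distinct (pre @ cyc)"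

definition play_cost :: "('v \<Rightarrow> 'v \<Rightarrow> int) \<Rightarrow> real \<Rightarrow> (nat \<Rightarrow> 'v) \<Rightarrow> real" where
  "play_cost gamma d u = (\<Sum>k. real_of_int (gamma (u k) (u (Suc k))) / d ^ k)"

definition lasso_cost :: "('v \<Rightarrow> 'v \<Rightarrow> int) \<Rightarrow> real \<Rightarrow> 'v list \<Rightarrow> 'v list \<Rightarrow> real" where
  "lasso_cost gamma d pre cyc = play_cost gamma d (lasso_play pre cyc)"

end

theory Submission
  imports Defs
begin

(*
  A lasso with prefix length n and cycle length m yields a play that is periodic from position n
  on, so its cost for d = p/q is a finite prefix sum plus the cycle sum times
  d^m / ((d^m - 1) d^n).  Multiplying by p^n (p^m - q^m) clears every denominator, and for a
  simple lasso n + m <= |V| bounds this number by p^|V| (p^|V| - q^|V|).  The difference of two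
  such costs therefore has denominator at most the square of that bound, and the minimal
  non-zero difference is attained, there being only finitely many simple lassos.
*)

lemma periodic_mod:
  fixes g :: "nat \<Rightarrow> 'a"
  assumes "\<And>k. g (k + m) = g k"
  shows "g k = g (k mod m)"
proof -
  have "g (j + i * m) = g j" for i j
  proof (induction i)
    case (Suc i)
    then show ?case using assms[of "j + i * m"] by (simp add: ac_simps)
  qed simp
  from this[of "k mod m" "k div m"] show ?thesis by simp
qed

lemma discounted_sum_periodic:
  fixes g :: "nat \<Rightarrow> real"
  assumes d_gt_1: "d > 1" and m_pos: "m > 0" and per: "\<And>k. g (k + m) = g k"
  shows "summable (\<lambda>k. g k / d ^ k)"
    and "(\<Sum>k. g k / d ^ k) = (\<Sum>k<m. g k / d ^ k) * d ^ m / (d ^ m - 1)"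
proof -
  define f where "f k = g k / d ^ k" for k
  define M where "M = Max (abs ` g ` {..<m})"
  have "\<bar>g k\<bar> \<le> M" for k
    using periodic_mod[of g m k, OF per] m_pos unfolding M_def by simp
  then have "norm (f k) \<le> M * (1 / d) ^ k" for k
    using d_gt_1 by (simp add: f_def power_one_over divide_right_mono)
  moreover have "summable (\<lambda>k. M * (1 / d) ^ k)"
    using d_gt_1 by (intro summable_mult summable_geometric) simp
  ultimately show sf: "summable (\<lambda>k. g k / d ^ k)"
    unfolding f_def[symmetric] by (blast intro: summable_comparison_test')
  define T where "T = (\<Sum>k. f k)"
  define B where "B = (\<Sum>k<m. f k)"
  define e where "e = d ^ m"
  have "T = (\<Sum>k. f (k + m)) + B"
    using suminf_split_initial_segment[OF sf, of m] by (simp add: T_def B_def f_def)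
  also have "(\<Sum>k. f (k + m)) = T / e"
    using suminf_divide[OF sf, of e] by (simp add: T_def e_def f_def per power_add mult.commute)
  finally have "T = T / e + B" .
  moreover have "e > 1" using d_gt_1 m_pos by (simp add: e_def)
  ultimately have "T = B * e / (e - 1)"
    by (simp add: field_simps)
  then show "(\<Sum>k. g k / d ^ k) = (\<Sum>k<m. g k / d ^ k) * d ^ m / (d ^ m - 1)"
    by (simp add: T_def B_def e_def f_def)
qed

lemma play_cost_eventually_periodic:
  assumes d_gt_1: "d > 1" and m_pos: "m > 0" and per: "\<And>k. u (k + n + m) = u (k + n)"
  shows "play_cost gamma d u = (\<Sum>k<n. gamma (u k) (u (Suc k)) / d ^ k)
           + (\<Sum>k<m. gamma (u (k + n)) (u (Suc (k + n))) / d ^ k) * d ^ m / ((d ^ m - 1) * d ^ n)"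
proof -
  define w where "w k = real_of_int (gamma (u k) (u (Suc k)))" for k
  have per_w: "w (k + m + n) = w (k + n)" for k
    using per[of k] per[of "Suc k"] by (simp add: w_def ac_simps)
  note tail = discounted_sum_periodic[of d m "\<lambda>k. w (k + n)", OF d_gt_1 m_pos per_w]
  have tail_eq: "(\<lambda>k. w (k + n) / d ^ (k + n)) = (\<lambda>k. w (k + n) / d ^ k / d ^ n)"
    by (simp add: power_add)
  have "summable (\<lambda>k. w (k + n) / d ^ (k + n))"
    unfolding tail_eq using tail(1) by (rule summable_divide)
  then have s: "summable (\<lambda>k. w k / d ^ k)"
    by (rule summable_iff_shift[THEN iffD1])
  have "play_cost gamma d u = (\<Sum>k. w (k + n) / d ^ (k + n)) + (\<Sum>k<n. w k / d ^ k)"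
    using suminf_split_initial_segment[OF s, of n] by (simp add: play_cost_def w_def)
  also have "(\<Sum>k. w (k + n) / d ^ (k + n)) = (\<Sum>k. w (k + n) / d ^ k) / d ^ n"
    unfolding tail_eq using suminf_divide[OF tail(1)] by simp
  finally show ?thesis
    using tail(2) by (simp add: w_def)
qed

lemma discounted_sum_times_power_Ints:
  fixes p q :: nat and a :: "nat \<Rightarrow> int"
  assumes "0 < p" "0 < q" "n \<le> N"
  shows "(\<Sum>k<n. a k / (real p / real q) ^ k) * real p ^ N \<in> \<int>"
proof -
  have summand:
    "a k / (real p / real q) ^ k * real p ^ N = of_int (a k * int q ^ k * int p ^ (N - k))"
    if "k < n" for k
  proof -
    have "real p ^ N = real p ^ k * real p ^ (N - k)"
      using that assms(3) by (simp flip: power_add)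
    then show ?thesis using assms(1,2) by (simp add: power_divide field_simps)
  qed
  have "(\<Sum>k<n. a k / (real p / real q) ^ k) * real p ^ N
      = of_int (\<Sum>k<n. a k * int q ^ k * int p ^ (N - k))"
    unfolding sum_distrib_right of_int_sum by (intro sum.cong refl) (use summand in auto)
  then show ?thesis by (metis Ints_of_int)
qed

lemma play_cost_eventually_periodic_times_denom_Ints:
  fixes p q :: nat
  assumes q_pos: "0 < q" and q_lt_p: "q < p" and m_pos: "m > 0" and per: "\<And>k. u (k + n + m) = u (k + n)"
  shows "play_cost gamma (real p / real q) u * (real p ^ n * (real p ^ m - real q ^ m)) \<in> \<int>"
proof -
  define d where "d = real p / real q"
  define P where "P = (\<Sum>k<n. gamma (u k) (u (Suc k)) / d ^ k)"
  define C where "C = (\<Sum>k<m. gamma (u (k + n)) (u (Suc (k + n))) / d ^ k)"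
  have p_pos: "0 < p" using q_lt_p by simp
  have "d > 1" using q_pos q_lt_p by (simp add: d_def)
  then have cost: "play_cost gamma d u = P + C * (d ^ m / ((d ^ m - 1) * d ^ n))"
    unfolding P_def C_def using play_cost_eventually_periodic[OF _ m_pos per] by simp
  have "real q ^ m < real p ^ m" using q_lt_p m_pos by (simp add: power_strict_mono)
  then have factor: "d ^ m / ((d ^ m - 1) * d ^ n) * (real p ^ n * (real p ^ m - real q ^ m))
      = real p ^ m * real q ^ n"
    using p_pos q_pos by (simp add: d_def power_divide field_simps)
  have "play_cost gamma d u * (real p ^ n * (real p ^ m - real q ^ m))
      = P * real p ^ n * (real p ^ m - real q ^ m) + C * real p ^ m * real q ^ n"
    unfolding cost distrib_right mult.assoc factor by simp
  moreover have "P * real p ^ n \<in> \<int>" "C * real p ^ m \<in> \<int>"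
    unfolding P_def C_def d_def using discounted_sum_times_power_Ints p_pos q_pos by auto
  ultimately show ?thesis
    unfolding d_def by simp
qed

definition has_denom_le :: "real \<Rightarrow> int \<Rightarrow> bool" where
  "has_denom_le x B \<longleftrightarrow> (\<exists>a b :: int. 0 < b \<and> b \<le> B \<and> x = of_int a / of_int b)"

lemma has_denom_leI:
  assumes "0 < b" "b \<le> B" "x * of_int b \<in> \<int>"
  shows "has_denom_le x B"
proof -
  from assms(3) obtain a where "x * of_int b = of_int a" by (elim Ints_cases)
  then have "x = of_int a / of_int b" using assms(1) by (simp add: field_simps)
  then show ?thesis using assms(1,2) unfolding has_denom_le_def by blast
qed

lemma has_denom_le_abs_diff:
  assumes "has_denom_le x B" "has_denom_le y C"
  shows "has_denom_le \<bar>x - y\<bar> (B * C)"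
proof -
  obtain a b a' b' :: int
    where b: "0 < b" "b \<le> B" "x = of_int a / of_int b"
      and b': "0 < b'" "b' \<le> C" "y = of_int a' / of_int b'"
    using assms unfolding has_denom_le_def by blast
  have "x - y = of_int (a * b' - a' * b) / of_int (b * b')"
    unfolding b(3) b'(3) using b(1) b'(1) by (simp add: field_simps)
  then have "\<bar>x - y\<bar> = of_int \<bar>a * b' - a' * b\<bar> / of_int (b * b')"
    using b b' by simp
  moreover have "b * b' \<le> B * C" using b b' by (simp add: mult_mono)
  ultimately show ?thesis
    unfolding has_denom_le_def using b b' by (metis mult_pos_pos of_int_abs of_int_mult)
qed

lemma lasso_play_periodic:
  "lasso_play pre cyc (k + length pre + length cyc) = lasso_play pre cyc (k + length pre)"
  by (simp add: lasso_play_def)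

lemma simple_lasso_length_le_card:
  assumes "finite V" "simple_lasso V E vinit pre cyc"
  shows "length pre + length cyc \<le> card V"
proof -
  have "length pre + length cyc = card (set (pre @ cyc))"
    using assms(2) distinct_card[of "pre @ cyc"] unfolding simple_lasso_def by simp
  also have "\<dots> \<le> card V"
    using assms unfolding simple_lasso_def lasso_def by (intro card_mono) auto
  finally show ?thesis .
qed

lemma finite_simple_lassos:
  assumes "finite V"
  shows "finite {(pre, cyc). simple_lasso V E vinit pre cyc}"
proof -
  define W where "W = {xs. set xs \<subseteq> V \<and> length xs \<le> card V}"
  have "(pre, cyc) \<in> W \<times> W" if sl: "simple_lasso V E vinit pre cyc" for pre cyc
  proof -
    have "set pre \<subseteq> V" "set cyc \<subseteq> V" using sl by (auto simp: simple_lasso_def lasso_def)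
    then show ?thesis using simple_lasso_length_le_card[OF assms sl] by (simp add: W_def)
  qed
  then have "{(pre, cyc). simple_lasso V E vinit pre cyc} \<subseteq> W \<times> W" by auto
  moreover have "finite W" unfolding W_def using assms by (rule finite_lists_length_le)
  ultimately show ?thesis by (meson finite_SigmaI finite_subset)
qed

lemma diff_powers_mono:
  fixes p q :: int
  assumes "0 \<le> q" "q \<le> p" "m \<le> N"
  shows "p ^ m - q ^ m \<le> p ^ N - q ^ N"
  using assms(3)
proof (induction N rule: dec_induct)
  case (step k)
  have "p ^ k - q ^ k \<le> p * (p ^ k - q ^ k)"
    using assms(1,2) power_mono[OF assms(2,1), of k]
    by (cases "p = 0") (simp_all add: mult_le_cancel_right1)
  moreover have "0 \<le> (p - q) * q ^ k" using assms(1,2) by simp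
  ultimately show ?case using step.IH by (simp add: algebra_simps)
qed simp

lemma simple_lasso_cost_has_denom_le:
  fixes p q :: nat
  assumes V: "finite V" and q_pos: "0 < q" and q_lt_p: "q < p" and sl: "simple_lasso V E vinit pre cyc"
  shows "has_denom_le (lasso_cost gamma (real p / real q) pre cyc)
           (int p ^ card V * (int p ^ card V - int q ^ card V))"
proof (rule has_denom_leI)
  define n where "n = length pre"
  define m where "m = length cyc"
  define N where "N = card V"
  have len: "n + m \<le> N" using simple_lasso_length_le_card[OF V sl] by (simp add: n_def m_def N_def)
  have m_pos: "m > 0" using sl by (simp add: m_def simple_lasso_def lasso_def)
  show "0 < int p ^ n * (int p ^ m - int q ^ m)"
    using q_lt_p m_pos by (simp add: power_strict_mono)
  have "int p ^ n \<le> int p ^ N" using len q_lt_p by (intro power_increasing) auto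
  moreover have "int p ^ m - int q ^ m \<le> int p ^ N - int q ^ N"
    using len q_lt_p by (intro diff_powers_mono) auto
  ultimately show
    "int p ^ n * (int p ^ m - int q ^ m) \<le> int p ^ card V * (int p ^ card V - int q ^ card V)"
    using q_lt_p m_pos unfolding N_def by (intro mult_mono) (auto simp: power_strict_mono less_imp_le)
  show "lasso_cost gamma (real p / real q) pre cyc * of_int (int p ^ n * (int p ^ m - int q ^ m))
      \<in> \<int>"
    using play_cost_eventually_periodic_times_denom_Ints
        [OF q_pos q_lt_p m_pos lasso_play_periodic[of pre cyc, folded n_def m_def]]
    by (simp add: lasso_cost_def n_def m_def)
qed

theorem corollary2:
  fixes V V0 V1 :: "'v set" and vinit :: 'v and E :: "('v \<times> 'v) set"
    and gamma :: "'v \<Rightarrow> 'v \<Rightarrow> int" and p q :: nat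
  assumes "quant_game V V0 V1 vinit E"
    and "p > 0" and "q > 0" and "real p / real q > 1"
    and "\<exists>pre1 cyc1 pre2 cyc2. simple_lasso V E vinit pre1 cyc1 \<and> simple_lasso V E vinit pre2 cyc2 \<and>
           lasso_cost gamma (real p / real q) pre1 cyc1 \<noteq> lasso_cost gamma (real p / real q) pre2 cyc2"
  shows "\<exists>a b :: int. 0 < b \<and>
           b \<le> (int p ^ card V - int q ^ card V)\<^sup>2 * int p ^ (2 * card V) \<and>
           Min {\<bar>lasso_cost gamma (real p / real q) pre1 cyc1 - lasso_cost gamma (real p / real q) pre2 cyc2\<bar> |
                  pre1 cyc1 pre2 cyc2. simple_lasso V E vinit pre1 cyc1 \<and> simple_lasso V E vinit pre2 cyc2 \<and>
                  lasso_cost gamma (real p / real q) pre1 cyc1 \<noteq> lasso_cost gamma (real p / real q) pre2 cyc2}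
           = real_of_int a / real_of_int b"
proof -
  define c where "c = lasso_cost gamma (real p / real q)"
  define L where "L = {(pre, cyc). simple_lasso V E vinit pre cyc}"
  define S where "S = {\<bar>c pre1 cyc1 - c pre2 cyc2\<bar> | pre1 cyc1 pre2 cyc2.
    simple_lasso V E vinit pre1 cyc1 \<and> simple_lasso V E vinit pre2 cyc2 \<and> c pre1 cyc1 \<noteq> c pre2 cyc2}"
  define B where "B = int p ^ card V * (int p ^ card V - int q ^ card V)"
  have V: "finite V" using assms(1) by (simp add: quant_game_def)
  have q_lt_p: "q < p" using assms(3,4) by (simp add: field_simps)
  have "S \<subseteq> (\<lambda>((pre1, cyc1), (pre2, cyc2)). \<bar>c pre1 cyc1 - c pre2 cyc2\<bar>) ` (L \<times> L)"
    unfolding S_def L_def by force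
  then have "finite S"
    using finite_simple_lassos[OF V] unfolding L_def by (meson finite_SigmaI finite_imageI finite_subset)
  moreover have "S \<noteq> {}" using assms(5) unfolding S_def c_def by blast
  ultimately have "Min S \<in> S" by (rule Min_in)
  then obtain m pre1 cyc1 pre2 cyc2 where min: "Min S = m" "m = \<bar>c pre1 cyc1 - c pre2 cyc2\<bar>"
    and sl1: "simple_lasso V E vinit pre1 cyc1" and sl2: "simple_lasso V E vinit pre2 cyc2"
    unfolding S_def by blast
  have "has_denom_le m (B * B)"
    unfolding min c_def B_def
    using simple_lasso_cost_has_denom_le[OF V assms(3) q_lt_p sl1]
      simple_lasso_cost_has_denom_le[OF V assms(3) q_lt_p sl2]
    by (rule has_denom_le_abs_diff)
  moreover have "B * B = (int p ^ card V - int q ^ card V)\<^sup>2 * int p ^ (2 * card V)"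
    unfolding B_def by (simp add: power2_eq_square power_mult algebra_simps)
  ultimately show ?thesis
    using min(1) unfolding has_denom_le_def S_def c_def by auto
qed

end
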